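(* For a prime $p$ and a positive integer $h$, let $$Med^{(2)}(p,h)=\lim_{k\to\infty}\frac{\#\{a\in\mathbb{Z}/p^k\mathbb{Z}: a\in Sq(p,k)\text{ and } a+h\in Sq(p,k)\}}{p^k},$$ where $Sq(p,k)$ is the set of residues $b\in\mathbb{Z}/p^k\mathbb{Z}$ with $b\equiv x^2+y^2\pmod{p^k}$ for some integers $x,y$. Then the limit exists and (a) $Med^{(2)}(p,h)=1$ if $p\equiv1\pmod4$; (b) $Med^{(2)}(p,h)=\dfrac{1-p^{-(m_p(h)+1)}}{1+p^{-1}}$ if $p\equiv3\pmod4$; (c) $Med^{(2)}(2,h)=\tfrac14$ if $m_2(h)=0$, and $Med^{(2)}(2,h)=\dfrac{2^{m_2(h)+1}-3}{2^{m_2(h)+2}}$ if $m_2(h)\ge1$.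
   Context: $m_p(h)$ denotes the exponent of the prime $p$ in the factorization of $h$. *)

theory Defs
  imports "HOL-Analysis.Analysis" "HOL-Number_Theory.Number_Theory"
begin

definition Sq :: "nat \<Rightarrow> nat \<Rightarrow> int set" where
  "Sq p k = {b \<in> {0..<int p ^ k}. \<exists>x y :: int. [b = x^2 + y^2] (mod (int p ^ k))}"

definition med_ratio :: "nat \<Rightarrow> int \<Rightarrow> nat \<Rightarrow> real" where
  "med_ratio p h k = real (card {a \<in> {0..<int p ^ k}. a \<in> Sq p k \<and> (a + h) mod (int p ^ k) \<in> Sq p k})
                     / real p ^ k"

definition Med2 :: "nat \<Rightarrow> int \<Rightarrow> real" where
  "Med2 p h = lim (med_ratio p h)"

end

(*
  Write "b is a sum of two squares modulo n" for the existence of x, y with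
  b = x^2 + y^2 (mod n).  The proof rests on an explicit description of these
  residues modulo prime powers:
   - p = 1 (mod 4): -1 is a square mod p^k, hence every residue is a sum of two
     squares, so the density of pairs is identically 1;
   - p = 3 (mod 4): modulo p^(j+2), b is a sum of two squares iff p does not
     divide b, or p^2 divides b and b/p^2 is a sum of two squares mod p^j;
   - p = 2: modulo 2^(j+2), b is a sum of two squares iff b = 1 (mod 4), or b is
     even and b/2 is a sum of two squares mod 2^(j+1).
  The units case rests on a pigeonhole argument mod p and Hensel lifting.
  These descriptions turn the number of a with a, a + h both sums of two
  squares into linear recurrences in k and in the multiplicity of p in h.
  Solving them (induction on the multiplicity) gives the convergence of the
  densities and the three closed forms of the limit.
*)
theory Submission
  imports Defs
begin

section \<open>Sums of two squares modulo n\<close>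

definition sos_mod :: "int \<Rightarrow> int \<Rightarrow> bool" where
  "sos_mod n b \<longleftrightarrow> (\<exists>x y. [b = x^2 + y^2] (mod n))"

lemma sos_mod_cong: "[a = b] (mod n) \<Longrightarrow> sos_mod n a = sos_mod n b"
  unfolding sos_mod_def by (meson cong_sym cong_trans)

lemma sos_mod_mod [simp]: "sos_mod n (a mod n) = sos_mod n a"
  by (rule sos_mod_cong) (simp add: cong_def)

lemma sos_mod_zero [simp]: "sos_mod n 0"
  unfolding sos_mod_def by (intro exI[of _ 0]) simp

lemma sos_mod_scale:
  assumes "sos_mod n b" shows "sos_mod (q^2 * n) (q^2 * b)"
proof -
  from assms obtain x y where "n dvd b - (x^2 + y^2)"
    unfolding sos_mod_def cong_iff_dvd_diff by blast
  then have "q^2 * n dvd q^2 * (b - (x^2 + y^2))" by (simp add: mult_dvd_mono)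
  moreover have "q^2 * (b - (x^2 + y^2)) = q^2 * b - ((q*x)^2 + (q*y)^2)"
    by (simp add: algebra_simps power_mult_distrib)
  ultimately show ?thesis unfolding sos_mod_def cong_iff_dvd_diff by metis
qed

section \<open>Units modulo powers of an odd prime\<close>

text \<open>Hensel step: a representation u = x^2 + y^2 mod P^k with P not dividing x
  lifts to one mod P^(k+1), changing x by a multiple of P^k.\<close>
lemma sos_lift_step:
  fixes P u x y :: int
  assumes P: "prime P" "odd P" and k: "k \<ge> 1" and x: "\<not> P dvd x"
    and c: "[u = x^2 + y^2] (mod P^k)"
  shows "\<exists>x'. \<not> P dvd x' \<and> [u = x'^2 + y^2] (mod P^(k+1))"
proof -
  obtain t where t: "u - (x^2 + y^2) = P^k * t"
    using c unfolding cong_iff_dvd_diff dvd_def by blast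
  have "coprime (2*x) P"
    using x P prime_imp_coprime coprime_commute by (auto simp: coprime_commute)
  then obtain z where z: "[2*x*z = 1] (mod P)" using cong_solve_coprime_int by blast
  define w where "w = z*t"
  define x' where "x' = x + w*P^k"
  have "[2*x*z*t = 1*t] (mod P)" using z cong_scalar_right by blast
  then have t_w: "P dvd t - 2*x*w" unfolding w_def cong_iff_dvd_diff
    by (metis dvd_minus_iff minus_diff_eq mult.assoc mult_1)
  have eq: "u - (x'^2 + y^2) = P^k * (t - 2*x*w) - w^2 * (P^k * P^k)"
    using t unfolding x'_def by (simp add: power2_eq_square algebra_simps)
  have "P dvd P^k" using k by (simp add: dvd_power)
  then have "P^(k+1) dvd w^2 * (P^k * P^k)" by (simp add: mult_dvd_mono dvd_mult)
  moreover have "P^(k+1) dvd P^k * (t - 2*x*w)" using t_w by (simp add: mult_dvd_mono)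
  ultimately have "P^(k+1) dvd u - (x'^2 + y^2)" using eq by simp
  moreover have "\<not> P dvd x'"
  proof
    assume "P dvd x'"
    moreover have "P dvd w*P^k" using k by (simp add: dvd_power)
    ultimately have "P dvd x" unfolding x'_def by (metis add_diff_cancel_right' dvd_diff)
    then show False using x by simp
  qed
  ultimately show ?thesis unfolding cong_iff_dvd_diff by blast
qed

lemma sos_lift:
  fixes P u x y :: int
  assumes P: "prime P" "odd P" and x: "\<not> P dvd x" and c: "[u = x^2 + y^2] (mod P)"
  shows "\<exists>x'. \<not> P dvd x' \<and> [u = x'^2 + y^2] (mod P^(Suc k))"
proof (induction k)
  case 0
  then show ?case using x c by auto
next
  case (Suc k)
  then obtain x' where "\<not> P dvd x'" "[u = x'^2 + y^2] (mod P^(Suc k))" by blast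
  from sos_lift_step[OF P _ this] show ?case by simp
qed

lemma half_squares_inj:
  fixes P x z :: int
  assumes P: "prime P" and x: "x \<in> {0..(P-1) div 2}" and z: "z \<in> {0..(P-1) div 2}"
    and e: "x^2 mod P = z^2 mod P"
  shows "x = z"
proof -
  have "P dvd (x - z) * (x + z)"
    using e by (simp add: mod_eq_dvd_iff algebra_simps power2_eq_square)
  then have "P dvd x - z \<or> P dvd x + z" using P prime_dvd_mult_iff by blast
  moreover have "\<bar>x - z\<bar> < P" "\<bar>x + z\<bar> < P" using x z by auto
  moreover have "d = 0" if "P dvd d" "\<bar>d\<bar> < P" for d
    using that dvd_imp_le_int[of d P] by (cases "d = 0") auto
  ultimately have "x - z = 0 \<or> x + z = 0" by blast
  then show ?thesis using x z by auto
qed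

text \<open>Pigeonhole: the (P+1)/2 values x^2 and the (P+1)/2 values u - y^2
  cannot be disjoint mod P, so u = x^2 + y^2 mod P, and x can be chosen prime
  to P when u is.\<close>
lemma unit_sos_mod_prime:
  fixes P u :: int
  assumes P: "prime P" "odd P" and u: "\<not> P dvd u"
  shows "\<exists>x y. \<not> P dvd x \<and> [u = x^2 + y^2] (mod P)"
proof -
  define H where "H = {0..(P-1) div 2}"
  define A where "A = (\<lambda>x. x^2 mod P) ` H"
  define B where "B = (\<lambda>y. (u - y^2) mod P) ` H"
  have P2: "P \<ge> 2" using P prime_ge_2_int by blast
  have inj_A: "inj_on (\<lambda>x. x^2 mod P) H"
    unfolding inj_on_def H_def using half_squares_inj[OF P(1)] by blast
  have inj_B: "inj_on (\<lambda>y. (u - y^2) mod P) H"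
  proof (rule inj_onI)
    fix x z assume "x \<in> H" "z \<in> H" "(u - x^2) mod P = (u - z^2) mod P"
    then have "P dvd -(x^2 - z^2)" by (simp add: mod_eq_dvd_iff algebra_simps)
    then have "x^2 mod P = z^2 mod P" by (simp only: dvd_minus_iff mod_eq_dvd_iff)
    then show "x = z" using half_squares_inj[OF P(1)] \<open>x \<in> H\<close> \<open>z \<in> H\<close> unfolding H_def by blast
  qed
  have card_H: "card H = nat ((P-1) div 2 + 1)" unfolding H_def by simp
  have "A \<union> B \<subseteq> {0..<P}" unfolding A_def B_def using P2 by auto
  then have card_AB: "card (A \<union> B) \<le> nat P" using card_mono[of "{0..<P}"] by simp
  have "A \<inter> B \<noteq> {}"
  proof
    assume "A \<inter> B = {}"
    then have "card (A \<union> B) = card A + card B"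
      unfolding A_def B_def H_def by (simp add: card_Un_disjoint)
    also have "\<dots> = 2 * nat ((P-1) div 2 + 1)"
      unfolding A_def B_def using card_image[OF inj_A] card_image[OF inj_B] card_H by simp
    finally have "2 * nat ((P-1) div 2 + 1) \<le> nat P" using card_AB by simp
    moreover have "2 * ((P-1) div 2) = P - 1" using P(2) by presburger
    ultimately show False using P2 by linarith
  qed
  then obtain x y where "x \<in> H" "y \<in> H" "x^2 mod P = (u - y^2) mod P"
    unfolding A_def B_def by auto
  then have "P dvd -(u - (x^2 + y^2))" by (simp add: mod_eq_dvd_iff algebra_simps)
  then have c: "[u = x^2 + y^2] (mod P)" unfolding cong_iff_dvd_diff by (simp only: dvd_minus_iff)
  have "\<not> (P dvd x \<and> P dvd y)"
  proof
    assume "P dvd x \<and> P dvd y"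
    then have "P dvd x^2 + y^2" by (auto simp: power2_eq_square)
    moreover have "P dvd u - (x^2 + y^2)" using c unfolding cong_iff_dvd_diff .
    ultimately have "P dvd (u - (x^2 + y^2)) + (x^2 + y^2)" by (rule dvd_add[rotated])
    then show False using u by simp
  qed
  moreover have "[u = y^2 + x^2] (mod P)" using c by (simp add: add.commute)
  ultimately show ?thesis using c by blast
qed

lemma unit_sos_mod_prime_power:
  fixes P u :: int
  assumes P: "prime P" "odd P" and u: "\<not> P dvd u"
  shows "sos_mod (P^k) u"
proof (cases k)
  case 0 then show ?thesis by (simp add: sos_mod_def)
next
  case (Suc j)
  obtain x y where "\<not> P dvd x" "[u = x^2 + y^2] (mod P)"
    using unit_sos_mod_prime[OF P u] by blast
  from sos_lift[OF P this, of j] show ?thesis unfolding sos_mod_def Suc by blast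
qed

text \<open>By Euler's criterion, -1 is a square mod an odd prime p iff p = 1 mod 4.\<close>
lemma QuadRes_minus_one_iff:
  assumes p: "prime p" "2 < p"
  shows "QuadRes (int p) (-1) \<longleftrightarrow> p mod 4 = 1"
proof -
  have not_cong: "\<not> [1 = -1] (mod int p)"
  proof
    assume "[1 = -1] (mod int p)"
    then have "int p dvd 2" unfolding cong_iff_dvd_diff by simp
    then show False using p(2) zdvd_imp_le[of "int p" 2] by simp
  qed
  have nz: "\<not> [-1 = 0] (mod int p)"
    using p(2) by (auto simp: cong_iff_dvd_diff)
  have euler: "[Legendre (-1) (int p) = (-1) ^ ((p - 1) div 2)] (mod int p)"
    using euler_criterion[OF p] by simp
  have "odd p" using p prime_odd_nat by blast
  then have "p mod 4 = 1 \<or> p mod 4 = 3" by presburger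
  then consider "p mod 4 = 1" | "p mod 4 = 3" by blast
  then show ?thesis
  proof cases
    case 1
    then have "even ((p - 1) div 2)" by presburger
    then have "[Legendre (-1) (int p) = 1] (mod int p)" using euler by simp
    then show ?thesis using 1 nz not_cong cong_sym unfolding Legendre_def by (auto split: if_splits)
  next
    case 2
    then have "odd ((p - 1) div 2)" by presburger
    then have "[Legendre (-1) (int p) = -1] (mod int p)" using euler by simp
    then show ?thesis using 2 nz not_cong unfolding Legendre_def by (auto split: if_splits)
  qed
qed

section \<open>Primes congruent to 1 mod 4\<close>

text \<open>If -1 is a square and 2 is invertible mod n, every residue is a sum of two
  squares mod n: b = ((b+1)/2)^2 + (i(b-1)/2)^2.\<close>
lemma sos_mod_all:
  fixes n i b :: int
  assumes i: "[i^2 = -1] (mod n)" and n: "coprime 2 n"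
  shows "sos_mod n b"
proof -
  have ni: "n dvd i^2 + 1" using i unfolding cong_iff_dvd_diff by simp
  obtain w where "[2*w = 1] (mod n)" using cong_solve_coprime_int n by blast
  then have nw: "n dvd 2*w - 1" unfolding cong_iff_dvd_diff .
  define x where "x = (b+1)*w"
  define y where "y = i*(b-1)*w"
  have eq: "x^2 + y^2 - b = (w^2*(b-1)^2)*(i^2+1) + (b*(2*w+1))*(2*w - 1)"
    unfolding x_def y_def by (simp add: power2_eq_square algebra_simps)
  have "n dvd x^2 + y^2 - b" unfolding eq using ni nw by (simp add: dvd_mult)
  then have "[b = x^2 + y^2] (mod n)" by (metis cong_iff_dvd_diff dvd_minus_iff minus_diff_eq)
  then show ?thesis unfolding sos_mod_def by blast
qed

text \<open>For p = 1 mod 4, a square root of -1 mod p lifts to p^k, so every residue is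
  a sum of two squares mod p^k.\<close>
lemma sos_mod_prime_1_mod_4:
  assumes p: "prime p" "p mod 4 = 1"
  shows "sos_mod (int p ^ k) b"
proof -
  define P where "P = int p"
  have P: "prime P" "odd P" unfolding P_def using p by (auto, presburger)
  have "2 < p" using p prime_ge_2_nat[of p] by presburger
  then obtain i where i: "[i^2 = -1] (mod P)"
    using QuadRes_minus_one_iff[OF p(1)] p(2) unfolding QuadRes_def P_def by blast
  have "\<not> P dvd i"
  proof
    assume "P dvd i"
    moreover have "P dvd i^2 + 1" using i unfolding cong_iff_dvd_diff by simp
    ultimately have "P dvd (i^2 + 1) - i * i" by (intro dvd_diff) auto
    then show False using prime_gt_1_int[OF P(1)] by (simp add: power2_eq_square)
  qed
  moreover have "[-1 = i^2 + 0^2] (mod P)" using i cong_sym by simp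
  ultimately obtain i' where "[-1 = i'^2 + 0^2] (mod P^Suc k)" using sos_lift[OF P] by blast
  then have "[-1 = i'^2] (mod P^k)"
    using cong_dvd_modulus[of _ _ "P^Suc k" "P^k"] by (simp add: le_imp_power_dvd)
  then have "[i'^2 = -1] (mod P^k)" by (rule cong_sym)
  moreover have "coprime 2 (P^k)" using P by simp
  ultimately show ?thesis unfolding P_def by (rule sos_mod_all)
qed

section \<open>Primes congruent to 3 mod 4\<close>

text \<open>Since -1 is not a square mod p, p divides x^2 + y^2 only if it divides x.\<close>
lemma prime_3_mod_4_dvd_sos:
  assumes p: "prime p" "p mod 4 = 3" and c: "[x^2 + y^2 = 0] (mod int p)"
  shows "int p dvd x"
proof (rule ccontr)
  assume "\<not> int p dvd x"
  then have "coprime x (int p)" using p prime_imp_coprime coprime_commute by (metis prime_nat_int_transfer)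
  then obtain w where w: "[x*w = 1] (mod int p)" using cong_solve_coprime_int by blast
  have "[(x^2 + y^2)*w^2 = 0*w^2] (mod int p)" using c cong_scalar_right by blast
  then have "[(x*w)^2 + (y*w)^2 = 0] (mod int p)" by (simp add: algebra_simps power_mult_distrib)
  moreover have "[(x*w)^2 + (y*w)^2 = 1 + (y*w)^2] (mod int p)"
    using cong_add[OF cong_pow[OF w, of 2] cong_refl[of "(y*w)^2"]] by simp
  ultimately have "[1 + (y*w)^2 = 0] (mod int p)" using cong_sym cong_trans by blast
  then have "[(y*w)^2 = -1] (mod int p)" unfolding cong_iff_dvd_diff by (simp add: algebra_simps)
  moreover have "2 < p" using p prime_ge_2_nat[of p] by presburger
  ultimately show False using QuadRes_minus_one_iff[OF p(1)] p(2) unfolding QuadRes_def by auto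
qed

lemma sos_mod_prime_3_mod_4:
  assumes p: "prime p" "p mod 4 = 3"
  shows "sos_mod (int p ^ (j+2)) a \<longleftrightarrow>
    \<not> int p dvd a \<or> (int p ^ 2 dvd a \<and> sos_mod (int p ^ j) (a div int p ^ 2))"
proof -
  define P where "P = int p"
  have P: "prime P" "odd P" unfolding P_def using p by (auto, presburger)
  have P0: "P \<noteq> 0" using P by auto
  have pe: "P^(j+2) = P^2 * P^j" by (simp add: power_add mult.commute power2_eq_square)
  show ?thesis unfolding P_def[symmetric]
  proof
    assume s: "sos_mod (P^(j+2)) a"
    show "\<not> P dvd a \<or> (P^2 dvd a \<and> sos_mod (P^j) (a div P^2))"
    proof (cases "P dvd a")
      case True
      obtain x y where c: "[a = x^2 + y^2] (mod P^(j+2))" using s unfolding sos_mod_def by blast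
      have "[a = x^2 + y^2] (mod P)" using cong_dvd_modulus[OF c] by (simp add: dvd_power)
      moreover have "[a = 0] (mod P)" using True by (simp add: cong_0_iff)
      ultimately have c0: "[x^2 + y^2 = 0] (mod P)" by (meson cong_sym cong_trans)
      then have "P dvd x" "P dvd y"
        using prime_3_mod_4_dvd_sos[OF p, of x y] prime_3_mod_4_dvd_sos[OF p, of y x]
        unfolding P_def by (simp_all add: add.commute)
      then obtain x1 y1 where xy: "x = P*x1" "y = P*y1" by (auto elim!: dvdE)
      have d: "P^2 * P^j dvd a - P^2 * (x1^2 + y1^2)"
        using c unfolding cong_iff_dvd_diff pe xy by (simp add: power_mult_distrib algebra_simps)
      then have "P^2 dvd (a - P^2 * (x1^2 + y1^2)) + P^2 * (x1^2 + y1^2)"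
        using dvd_mult_left by (intro dvd_add) auto
      then obtain a1 where a1: "a = P^2 * a1" by (auto elim: dvdE)
      have "P^2 * P^j dvd P^2 * (a1 - (x1^2 + y1^2))" using d unfolding a1 by (simp add: algebra_simps)
      then have "P^j dvd a1 - (x1^2 + y1^2)" using P0 by simp
      then show ?thesis using a1 P0 unfolding sos_mod_def cong_iff_dvd_diff by auto
    qed blast
  next
    assume "\<not> P dvd a \<or> (P^2 dvd a \<and> sos_mod (P^j) (a div P^2))"
    then show "sos_mod (P^(j+2)) a"
    proof
      assume a: "P^2 dvd a \<and> sos_mod (P^j) (a div P^2)"
      then have "sos_mod (P^2 * P^j) (P^2 * (a div P^2))" using sos_mod_scale by blast
      moreover have "P^2 * (a div P^2) = a" using a by simp
      ultimately show ?thesis unfolding pe by metis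
    qed (use unit_sos_mod_prime_power[OF P] in blast)
  qed
qed


section \<open>The prime 2\<close>

lemma square_mod_4: fixes x :: int shows "x^2 mod 4 = (if even x then 0 else 1)"
proof (cases "even x")
  case True
  then obtain t where "x = 2*t" by blast
  then show ?thesis by (simp add: power2_eq_square)
next
  case False
  then obtain t where t: "x = 2*t + 1" using oddE by blast
  define s where "s = t*t + t"
  have "x^2 = 1 + s * 4" unfolding t s_def by (simp add: power2_eq_square algebra_simps)
  then show ?thesis using False by simp
qed

text \<open>A residue u = 1 mod 4 is x^2 + y^2 with x odd modulo every 2^(j+3); the step
  adds 2^(j+2) to x when the representation fails mod 2^(j+4).\<close>
lemma sos_lift_2:
  fixes u :: int assumes u: "u mod 4 = 1"
  shows "\<exists>x y. odd x \<and> [u = x^2 + y^2] (mod 2^(j+3))"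
proof (induction j)
  case 0
  have "u mod 8 = 1 \<or> u mod 8 = 5" using u by presburger
  then show ?case
  proof
    assume "u mod 8 = 1"
    then have "[u = 1^2 + 0^2] (mod 2^(0+3))" by (simp add: cong_def)
    then show ?thesis by (intro exI[of _ 1] exI[of _ 0]) simp
  next
    assume "u mod 8 = 5"
    then have "[u = 1^2 + 2^2] (mod 2^(0+3))" by (simp add: cong_def)
    then show ?thesis by (intro exI[of _ 1] exI[of _ 2]) simp
  qed
next
  case (Suc j)
  then obtain x y where x: "odd x" and c: "[u = x^2 + y^2] (mod 2^(j+3))" by blast
  obtain t where t: "u - (x^2 + y^2) = 2^(j+3) * t" using c unfolding cong_iff_dvd_diff dvd_def by blast
  define q where "q = (4::int) * 2^j"
  have q3: "(2::int)^(j+3) = 2*q" and q4: "(2::int)^(Suc j+3) = 4*q"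
    unfolding q_def by (simp_all add: power_add)
  show ?case
  proof (cases "even t")
    case True
    then obtain t' where "t = 2*t'" by blast
    then have "u - (x^2 + y^2) = 2^(Suc j+3) * t'" using t q3 q4 by simp
    then show ?thesis using x unfolding cong_iff_dvd_diff by (metis dvd_triv_left)
  next
    case False
    define x' where "x' = x + q"
    have "even (t - x)" using False x by simp
    then obtain e where e: "t - x = 2*e" by blast
    have "u - (x'^2 + y^2) = 2*q*(t - x) - q*q"
      using t q3 unfolding x'_def by (simp add: power2_eq_square algebra_simps)
    also have "\<dots> = 2^(Suc j+3) * (e - 2^j)" unfolding e q4 by (simp add: q_def algebra_simps)
    finally have "u - (x'^2 + y^2) = 2^(Suc j+3) * (e - 2^j)" .
    moreover have "odd x'" unfolding x'_def q_def using x by simp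
    ultimately show ?thesis unfolding cong_iff_dvd_diff by (metis dvd_triv_left)
  qed
qed

lemma odd_sos_mod_2_power:
  fixes u :: int assumes "odd u"
  shows "sos_mod (2^(j+2)) u \<longleftrightarrow> u mod 4 = 1"
proof
  assume "sos_mod (2^(j+2)) u"
  then obtain x y where c: "[u = x^2 + y^2] (mod 2^(j+2))" unfolding sos_mod_def by blast
  have "(4::int) dvd 2^(j+2)" by (simp add: power_add)
  then have "[u = x^2 + y^2] (mod 4)" using cong_dvd_modulus[OF c] by blast
  then have "u mod 4 = (x^2 mod 4 + y^2 mod 4) mod 4" unfolding cong_def by (simp add: mod_add_eq)
  moreover have "u mod 4 = 1 \<or> u mod 4 = 3" using assms by presburger
  ultimately show "u mod 4 = 1" unfolding square_mod_4 by (auto split: if_splits)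
next
  assume "u mod 4 = 1"
  from sos_lift_2[OF this, of j] obtain x y where "[u = x^2 + y^2] (mod 2^(j+3))" by blast
  moreover have "(2::int)^(j+2) dvd 2^(j+3)" by (rule le_imp_power_dvd) simp
  ultimately show "sos_mod (2^(j+2)) u" unfolding sos_mod_def using cong_dvd_modulus by blast
qed

text \<open>2b = x^2 + y^2 iff b = ((x+y)/2)^2 + ((x-y)/2)^2, so doubling both the
  residue and the modulus preserves sums of two squares.\<close>
lemma sos_mod_double: "sos_mod (2^(j+1)) (2*b) \<longleftrightarrow> sos_mod (2^j) b"
proof
  assume "sos_mod (2^(j+1)) (2*b)"
  then obtain x y where c: "2^(j+1) dvd 2*b - (x^2 + y^2)"
    unfolding sos_mod_def cong_iff_dvd_diff by blast
  have "(2::int) dvd 2^(j+1)" by simp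
  then have "2 dvd 2*b - (x^2 + y^2)" using c dvd_trans by blast
  then have "2 dvd 2*b - (2*b - (x^2 + y^2))" by (intro dvd_diff) simp_all
  then have "even (x + y)" by simp
  then obtain X where X: "x + y = 2*X" by blast
  define Y where "Y = X - y"
  have xy: "x = X + Y" "y = X - Y" unfolding Y_def using X by auto
  have "2 * 2^j dvd 2 * (b - (X^2 + Y^2))"
    using c unfolding xy by (simp add: power2_eq_square algebra_simps)
  then have "2^j dvd b - (X^2 + Y^2)" by (metis dvd_times_left_cancel_iff zero_neq_numeral)
  then show "sos_mod (2^j) b" unfolding sos_mod_def cong_iff_dvd_diff by blast
next
  assume "sos_mod (2^j) b"
  then obtain u v where "2^j dvd b - (u^2 + v^2)" unfolding sos_mod_def cong_iff_dvd_diff by blast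
  then have "2 * 2^j dvd 2 * (b - (u^2 + v^2))" by (rule mult_dvd_mono[OF dvd_refl])
  moreover have "2 * (b - (u^2 + v^2)) = 2*b - ((u+v)^2 + (u-v)^2)"
    by (simp add: power2_eq_square algebra_simps)
  moreover have "(2::int)^(j+1) = 2 * 2^j" by simp
  ultimately have "2^(j+1) dvd 2*b - ((u+v)^2 + (u-v)^2)" by metis
  then show "sos_mod (2^(j+1)) (2*b)" unfolding sos_mod_def cong_iff_dvd_diff by blast
qed

lemma sos_mod_2_power:
  "sos_mod (2^(j+2)) a \<longleftrightarrow> a mod 4 = 1 \<or> (even a \<and> sos_mod (2^(j+1)) (a div 2))"
proof (cases "even a")
  case True
  then obtain b where b: "a = 2*b" by blast
  moreover have "a mod 4 \<noteq> 1" using True by presburger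
  ultimately show ?thesis using sos_mod_double[of "j+1" b] by simp
qed (use odd_sos_mod_2_power[of a j] in simp)

section \<open>Counting residues\<close>

text \<open>The counts below are manipulated as sums of 0/1 indicators, so the
  simplifier should not turn such sums into cardinalities.\<close>
declare sum_of_bool_eq [simp del]

definition pair_count :: "int \<Rightarrow> int \<Rightarrow> int" where
  "pair_count n h = (\<Sum>a\<in>{0..<n}. of_bool (sos_mod n a \<and> sos_mod n (a + h)))"

definition sos_count :: "int \<Rightarrow> int" where
  "sos_count n = (\<Sum>a\<in>{0..<n}. of_bool (sos_mod n a))"

lemma med_ratio_pair_count:
  assumes "prime p"
  shows "med_ratio p h k = real_of_int (pair_count (int p ^ k) h) / real p ^ k"
proof -
  define n where "n = int p ^ k"
  have "n > 0" unfolding n_def using assms prime_gt_0_nat by simp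
  then have "{a \<in> {0..<n}. a \<in> Sq p k \<and> (a + h) mod n \<in> Sq p k}
      = {0..<n} \<inter> {a. sos_mod n a \<and> sos_mod n (a + h)}"
    unfolding Sq_def sos_mod_def[symmetric] n_def[symmetric] by auto
  moreover have "pair_count n h = int (card ({0..<n} \<inter> {a. sos_mod n a \<and> sos_mod n (a + h)}))"
    unfolding pair_count_def by (simp add: sum_of_bool_eq)
  ultimately show ?thesis unfolding med_ratio_def n_def by simp
qed

lemma sum_shift_periodic:
  fixes n c :: int and f :: "int \<Rightarrow> 'a::comm_monoid_add"
  assumes n: "n > 0" and per: "\<And>x. f (x mod n) = f x"
  shows "(\<Sum>a\<in>{0..<n}. f (a + c)) = (\<Sum>a\<in>{0..<n}. f a)"
proof (rule sum.reindex_bij_witness[of _ "\<lambda>b. (b - c) mod n" "\<lambda>a. (a + c) mod n"])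
  fix a assume a: "a \<in> {0..<n}"
  have "((a + c) mod n - c) mod n = ((a + c) - c) mod n" by (rule mod_diff_left_eq)
  then show "((a + c) mod n - c) mod n = a" using a by simp
  show "(a + c) mod n \<in> {0..<n}" using n by simp
  show "f ((a + c) mod n) = f (a + c)" using per by simp
next
  fix b assume b: "b \<in> {0..<n}"
  have "((b - c) mod n + c) mod n = ((b - c) + c) mod n" by (rule mod_add_left_eq)
  then show "((b - c) mod n + c) mod n = b" using b by simp
  show "(b - c) mod n \<in> {0..<n}" using n by simp
qed

lemma sum_multiples:
  fixes q N :: int and g :: "int \<Rightarrow> 'a::comm_monoid_add"
  assumes q: "q > 0"
  shows "(\<Sum>a\<in>{0..<q*N}. if q dvd a then g (a div q) else 0) = (\<Sum>b\<in>{0..<N}. g b)"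
proof -
  have "(\<Sum>a\<in>{0..<q*N}. if q dvd a then g (a div q) else 0) = (\<Sum>a\<in>{a\<in>{0..<q*N}. q dvd a}. g (a div q))"
    by (rule sum.inter_filter[symmetric]) simp
  also have "\<dots> = (\<Sum>b\<in>{0..<N}. g b)"
  proof (rule sum.reindex_bij_witness[of _ "\<lambda>b. q * b" "\<lambda>a. a div q"])
    fix a assume a: "a \<in> {a\<in>{0..<q*N}. q dvd a}"
    then show "q * (a div q) = a" by simp
    from a obtain t where t: "a = q*t" by (auto elim: dvdE)
    then have "0 \<le> t" "t < N" using a q by (auto simp: zero_le_mult_iff)
    then show "a div q \<in> {0..<N}" using t q by simp
  next
    fix b assume "b \<in> {0..<N}"
    then show "q * b div q = b" "q * b \<in> {a\<in>{0..<q*N}. q dvd a}"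
      using q by (auto simp: mult_strict_left_mono)
  qed simp
  finally show ?thesis .
qed

lemma count_multiples:
  fixes q N :: int assumes "q > 0" "N \<ge> 0"
  shows "(\<Sum>a\<in>{0..<q*N}. of_bool (q dvd a)) = N"
  using sum_multiples[OF assms(1), of "\<lambda>_. 1::int" N] assms by (simp add: of_bool_def)

lemma square_dvd_imp_dvd: "(x::int)^2 dvd a \<Longrightarrow> x dvd a"
  by (metis dvd_mult_left power2_eq_square)

text \<open>The modulus 2^(j+2) written as 2 times the next smaller modulus, the form in
  which the sums over even residues are reindexed.\<close>
lemma double_power: "(2::int)^(j+2) = 2 * 2^(j+1)"
  by simp

lemma count_1_mod_4: "(\<Sum>a\<in>{0..<(2::int)^(j+2)}. of_bool (a mod 4 = 1)) = (2::int)^j"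
proof -
  have n0: "(2::int)^(j+2) > 0" by simp
  have d4: "(4::int) dvd 2^(j+2)" by (simp add: power_add)
  have "(\<Sum>a\<in>{0..<(2::int)^(j+2)}. of_bool (a mod 4 = 1)) = (\<Sum>a\<in>{0..<(2::int)^(j+2)}. of_bool (4 dvd (a + -1)) :: int)"
    by (rule sum.cong) (auto, presburger+)
  also have "\<dots> = (\<Sum>a\<in>{0..<(2::int)^(j+2)}. of_bool (4 dvd a))"
    by (rule sum_shift_periodic[OF n0]) (simp only: dvd_mod_iff[OF d4])
  also have "\<dots> = 2^j"
    using count_multiples[of 4 "2^j"] by (simp add: power_add mult.commute)
  finally show ?thesis .
qed

text \<open>Exactly 2^j + 1 residues mod 2^(j+1) are sums of two squares: the residues
  1 mod 4 contribute 2^j at each level of the recursive description.\<close>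
lemma sos_count_2_power: "sos_count (2^(j+1)) = 2^j + 1"
proof (induction j)
  case 0
  have "{0..<(2::int)} = {0,1}" by auto
  moreover have "sos_mod 2 1" unfolding sos_mod_def by (intro exI[of _ 1] exI[of _ 0]) simp
  ultimately show ?case unfolding sos_count_def by simp
next
  case (Suc j)
  have pointwise: "of_bool (sos_mod (2^(j+2)) a) =
      of_bool (a mod 4 = 1) + (if 2 dvd a then of_bool (sos_mod (2^(j+1)) (a div 2)) else (0::int))" for a
    using sos_mod_2_power[of j a] by (auto; presburger)
  have evens: "(\<Sum>a\<in>{0..<(2::int)^(j+2)}. if 2 dvd a then of_bool (sos_mod (2^(j+1)) (a div 2)) else (0::int))
      = sos_count (2^(j+1))"
    unfolding double_power sos_count_def by (rule sum_multiples) simp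
  have "sos_count (2^(j+2)) = 2^j + sos_count (2^(j+1))"
    unfolding sos_count_def[of "2^(j+2)"] pointwise sum.distrib count_1_mod_4 evens ..
  then show ?case using Suc by simp
qed

text \<open>For odd h exactly one of a, a + h is odd, and it must be 1 mod 4.  Shifting
  the sum over the odd member shows that every even sum of two squares b is
  counted exactly once (as b = a or b = a + h, according to whether b + h or b - h
  is 1 mod 4).\<close>
lemma pair_count_2_odd:
  assumes h: "odd h"
  shows "pair_count (2^(j+2)) h = sos_count (2^(j+1))"
proof -
  define n :: int where "n = 2^(j+2)"
  have n0: "n > 0" unfolding n_def by simp
  have m: "sos_mod n x \<longleftrightarrow> x mod 4 = 1 \<or> (even x \<and> sos_mod (2^(j+1)) (x div 2))" for x
    unfolding n_def by (rule sos_mod_2_power)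
  define \<phi> :: "int \<Rightarrow> int" where "\<phi> x = of_bool (even x \<and> sos_mod n x)" for x
  define \<psi> where "\<psi> x = of_bool ((x - h) mod 4 = 1) * \<phi> x" for x
  have pointwise: "of_bool (sos_mod n a \<and> sos_mod n (a+h)) = \<psi> (a+h) + of_bool ((a+h) mod 4 = 1) * \<phi> a" for a
  proof (cases "even a")
    case True
    then have "odd (a+h)" using h by simp
    then have "sos_mod n (a+h) \<longleftrightarrow> (a+h) mod 4 = 1" using m[of "a+h"] by auto
    then show ?thesis using True \<open>odd (a+h)\<close> unfolding \<psi>_def \<phi>_def by auto
  next
    case False
    then have "even (a+h)" using h by simp
    have "sos_mod n a \<longleftrightarrow> a mod 4 = 1" using m[of a] False by auto
    then show ?thesis using False \<open>even (a+h)\<close> unfolding \<psi>_def \<phi>_def by auto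
  qed
  have d4: "(4::int) dvd n" and d2: "(2::int) dvd n" unfolding n_def by (simp_all add: power_add)
  have "(x mod n - h) mod 4 = (x - h) mod 4" for x
    by (metis d4 mod_diff_left_eq mod_mod_cancel)
  moreover have "\<phi> (x mod n) = \<phi> x" for x
    unfolding \<phi>_def using dvd_mod_iff[OF d2, of x] by simp
  ultimately have shift: "(\<Sum>a\<in>{0..<n}. \<psi> (a+h)) = (\<Sum>a\<in>{0..<n}. \<psi> a)"
    by (intro sum_shift_periodic[OF n0]) (simp add: \<psi>_def)
  have once: "\<psi> a + of_bool ((a+h) mod 4 = 1) * \<phi> a = \<phi> a" for a
  proof (cases "even a")
    case True
    then have "of_bool ((a - h) mod 4 = 1) + of_bool ((a+h) mod 4 = 1) = (1::int)"
      using h by (auto; presburger)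
    then show ?thesis unfolding \<psi>_def by (metis distrib_right mult_1 mult.commute)
  qed (simp add: \<psi>_def \<phi>_def)
  have \<phi>_eq: "\<phi> a = (if 2 dvd a then of_bool (sos_mod (2^(j+1)) (a div 2)) else 0)" for a
    using m[of a] unfolding \<phi>_def by (auto; presburger)
  have evens: "(\<Sum>a\<in>{0..<n}. \<phi> a) = sos_count (2^(j+1))"
    unfolding \<phi>_eq n_def double_power sos_count_def by (rule sum_multiples) simp
  have "pair_count n h = (\<Sum>a\<in>{0..<n}. \<psi> (a+h)) + (\<Sum>a\<in>{0..<n}. of_bool ((a+h) mod 4 = 1) * \<phi> a)"
    unfolding pair_count_def pointwise sum.distrib ..
  also have "\<dots> = (\<Sum>a\<in>{0..<n}. \<phi> a)" unfolding shift sum.distrib[symmetric] once ..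
  also have "\<dots> = sos_count (2^(j+1))" by (rule evens)
  finally show ?thesis unfolding n_def .
qed

text \<open>For even h, a and a + h have the same parity: two odd members must both be
  1 mod 4 (possible iff 4 divides h), two even members reduce to h / 2 mod 2^(j+1).\<close>
lemma pair_count_2_even:
  assumes h: "even h"
  shows "pair_count (2^(j+2)) h = (if 4 dvd h then 2^j else 0) + pair_count (2^(j+1)) (h div 2)"
proof -
  define n :: int where "n = 2^(j+2)"
  have m: "sos_mod n x \<longleftrightarrow> x mod 4 = 1 \<or> (even x \<and> sos_mod (2^(j+1)) (x div 2))" for x
    unfolding n_def by (rule sos_mod_2_power)
  have pointwise: "of_bool (sos_mod n a \<and> sos_mod n (a+h)) = of_bool (a mod 4 = 1 \<and> 4 dvd h) +
      (if 2 dvd a then of_bool (sos_mod (2^(j+1)) (a div 2) \<and> sos_mod (2^(j+1)) (a div 2 + h div 2)) else (0::int))"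
    for a
  proof (cases "even a")
    case True
    have "a mod 4 \<noteq> 1" "(a+h) mod 4 \<noteq> 1" "even (a+h)" using True h by presburger+
    moreover have "(a+h) div 2 = a div 2 + h div 2" using True by (simp add: div_plus_div_distrib_dvd_left)
    ultimately show ?thesis using m[of a] m[of "a+h"] True by simp
  next
    case False
    have "odd (a+h)" using False h by simp
    then have "sos_mod n a \<and> sos_mod n (a+h) \<longleftrightarrow> a mod 4 = 1 \<and> (a+h) mod 4 = 1"
      using m[of a] m[of "a+h"] False by auto
    moreover have "a mod 4 = 1 \<and> (a+h) mod 4 = 1 \<longleftrightarrow> a mod 4 = 1 \<and> 4 dvd h" using h by presburger
    ultimately show ?thesis using False by simp
  qed
  have "(\<Sum>a\<in>{0..<n}. if 2 dvd a then of_bool (sos_mod (2^(j+1)) (a div 2) \<and> sos_mod (2^(j+1)) (a div 2 + h div 2)) else (0::int))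
      = pair_count (2^(j+1)) (h div 2)"
    unfolding n_def double_power pair_count_def by (rule sum_multiples) simp
  moreover have "(\<Sum>a\<in>{0..<n}. of_bool (a mod 4 = 1 \<and> 4 dvd h)) = (if 4 dvd h then 2^j else (0::int))"
    using count_1_mod_4[of j] unfolding n_def by simp
  ultimately show ?thesis unfolding n_def[symmetric] pair_count_def[of n] pointwise sum.distrib by simp
qed


section \<open>Densities and their limits\<close>

lemma med_ratio_tendsto:
  assumes "prime p"
    and "(\<lambda>k. real_of_int (pair_count (int p ^ (k+2)) h) / real p ^ (k+2)) \<longlonglongrightarrow> L"
  shows "med_ratio p h \<longlonglongrightarrow> L"
proof -
  have eq: "med_ratio p h = (\<lambda>k. real_of_int (pair_count (int p ^ k) h) / real p ^ k)"
    using med_ratio_pair_count[OF assms(1)] by (rule ext)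
  have "(\<lambda>k. real_of_int (pair_count (int p ^ k) h) / real p ^ k) \<longlonglongrightarrow> L"
    using assms(2) by (rule LIMSEQ_offset[where k=2])
  then show ?thesis unfolding eq .
qed

lemma multiplicity_div_prime_power:
  fixes P h :: int
  assumes P: "prime P" and d: "P^n dvd h" and h: "h \<noteq> 0"
  shows "multiplicity P (h div P^n) = multiplicity P h - n"
proof -
  obtain q where q: "h = P^n * q" using d by (auto elim: dvdE)
  then have "q \<noteq> 0" using h by auto
  then have "multiplicity P h = multiplicity P (P^n) + multiplicity P q"
    unfolding q using P by (intro prime_elem_multiplicity_mult_distrib) auto
  also have "multiplicity P (P^n) = n"
    by (rule multiplicity_same_power) (use P not_prime_unit in auto)
  finally have "multiplicity P h = n + multiplicity P q" .
  moreover have "h div P^n = q" using q P by (simp add: prime_gt_0_int)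
  ultimately show ?thesis by simp
qed

text \<open>The limit for p = 3 mod 4, written in terms of r = 1/p.\<close>
definition dens_3_mod_4 :: "real \<Rightarrow> nat \<Rightarrow> real" where
  "dens_3_mod_4 r m = (1 - r^(m+1)) / (1 + r)"

lemma dens_3_mod_4_step: "r > 0 \<Longrightarrow> dens_3_mod_4 r (m+2) = (1 - r) + r^2 * dens_3_mod_4 r m"
  unfolding dens_3_mod_4_def by (simp add: field_simps power_add power2_eq_square)

lemma dens_3_mod_4_powi:
  "dens_3_mod_4 (1 / q) m = (1 - q powi (- (int m + 1))) / (1 + 1 / q)"
proof -
  have "- (int m + 1) = - int (m+1)" by simp
  then show ?thesis unfolding dens_3_mod_4_def
    by (simp only: power_int_minus power_int_of_nat) (simp add: power_one_over inverse_eq_divide)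
qed

definition dens_2 :: "nat \<Rightarrow> real" where
  "dens_2 m = (if m = 0 then 1/4 else (2 ^ (m + 1) - 3) / 2 ^ (m + 2))"

lemma dens_2_step: "dens_2 (Suc m) = (if m \<ge> 1 then 1/4 else 0) + dens_2 m / 2"
  unfolding dens_2_def by (simp add: field_simps power_add)

lemma med_ratio_prime_1_mod_4:
  assumes "prime p" "p mod 4 = 1"
  shows "med_ratio p h k = 1"
proof -
  have "pair_count (int p ^ k) h = int p ^ k"
    unfolding pair_count_def using sos_mod_prime_1_mod_4[OF assms] by simp
  then show ?thesis using med_ratio_pair_count[OF assms(1)] prime_gt_0_nat[OF assms(1)] by simp
qed

section \<open>Densities for primes congruent to 3 mod 4\<close>

context
  fixes p :: nat
  assumes p: "prime p" "p mod 4 = 3"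
begin

lemma int_p_pos: "int p > 0"
  using p prime_gt_0_nat by simp

lemma int_p_prime: "prime (int p)" "odd (int p)"
  using p by (auto, presburger)

lemma sum_multiples_p_sq:
  "(\<Sum>a\<in>{0..<int p^(j+2)}. if int p^2 dvd a then g (a div int p^2) else 0) = (\<Sum>b\<in>{0..<int p^j}. g b)"
proof -
  have e: "int p^(j+2) = int p^2 * int p^j" by (simp add: power_add mult.commute power2_eq_square)
  show ?thesis unfolding e by (rule sum_multiples) (use int_p_pos in simp)
qed

lemma count_multiples_p: "(\<Sum>a\<in>{0..<int p^(j+2)}. of_bool (int p dvd a)) = int p^(j+1)"
proof -
  have "int p^(j+2) = int p * int p^(j+1)" by simp
  then show ?thesis using count_multiples[of "int p" "int p^(j+1)"] int_p_pos by simp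
qed

lemma sos_count_step: "sos_count (int p ^ (j+2)) = int p ^ (j+2) - int p ^ (j+1) + sos_count (int p ^ j)"
proof -
  define P where "P = int p"
  have "of_bool (sos_mod (P^(j+2)) a) =
      (1 - of_bool (P dvd a) :: int) + (if P^2 dvd a then of_bool (sos_mod (P^j) (a div P^2)) else 0)" for a
    using sos_mod_prime_3_mod_4[OF p, of j a] square_dvd_imp_dvd[of "int p" a] unfolding P_def by auto
  then have "sos_count (P^(j+2)) = (\<Sum>a\<in>{0..<P^(j+2)}. 1) - (\<Sum>a\<in>{0..<P^(j+2)}. of_bool (P dvd a))
      + (\<Sum>a\<in>{0..<P^(j+2)}. if P^2 dvd a then of_bool (sos_mod (P^j) (a div P^2)) else 0)"
    unfolding sos_count_def by (simp add: sum.distrib sum_subtractf)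
  then show ?thesis
    using count_multiples_p[of j] sum_multiples_p_sq[where j=j] int_p_pos unfolding P_def sos_count_def by simp
qed

lemma sos_count_closed:
  "(int p + 1) * sos_count (int p ^ k) = int p ^ (k+1) + (if even k then 1 else int p)"
proof (induction k rule: less_induct)
  case (less k)
  consider "k = 0" | "k = 1" | j where "k = j + 2"
    by (metis add_2_eq_Suc' not0_implies_Suc One_nat_def)
  then show ?case
  proof cases
    case 1
    have "{0..<(1::int)} = {0}" by auto
    then show ?thesis using 1 unfolding sos_count_def by simp
  next
    case 2
    have "of_bool (sos_mod (int p) a) = (1::int)" if "a \<in> {0..<int p}" for a
    proof (cases "a = 0")
      case False
      then have "\<not> int p dvd a" using that by (auto dest: zdvd_imp_le)
      then show ?thesis using unit_sos_mod_prime_power[OF int_p_prime, of a 1] by simp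
    qed simp
    then have "sos_count (int p) = int p" unfolding sos_count_def by simp
    then show ?thesis using 2 by (simp add: algebra_simps power2_eq_square)
  next
    case 3
    then have "(int p + 1) * sos_count (int p ^ k)
        = (int p + 1) * (int p ^ (j+2) - int p ^ (j+1)) + (int p + 1) * sos_count (int p ^ j)"
      unfolding 3 sos_count_step by (simp add: algebra_simps)
    also have "\<dots> = int p ^ (k+1) + (if even k then 1 else int p)"
      using less.IH[of j] 3 by (simp add: algebra_simps power_add)
    finally show ?thesis .
  qed
qed

text \<open>For h prime to p: a and a + h are never both divisible by p, and every unit
  is a sum of two squares.\<close>
lemma pair_count_unit:
  assumes h: "\<not> int p dvd h"
  shows "pair_count (int p ^ (j+2)) h = int p ^ (j+2) - 2 * int p ^ (j+1) + 2 * sos_count (int p ^ j)"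
proof -
  define P where "P = int p"
  define n where "n = P^(j+2)"
  have n0: "n > 0" unfolding n_def P_def using int_p_pos by simp
  have Pn: "P dvd n" unfolding n_def by simp
  define \<phi> :: "int \<Rightarrow> int" where "\<phi> x = of_bool (P dvd x \<and> sos_mod n x)" for x
  have unit: "sos_mod n x" if "\<not> P dvd x" for x
    using that sos_mod_prime_3_mod_4[OF p] unfolding n_def P_def by blast
  have \<phi>_eq: "\<phi> a = (if P^2 dvd a then of_bool (sos_mod (P^j) (a div P^2)) else 0)" for a
    using sos_mod_prime_3_mod_4[OF p, of j a] square_dvd_imp_dvd[of "int p" a] unfolding \<phi>_def n_def P_def by auto
  have "of_bool (sos_mod n a \<and> sos_mod n (a+h)) = 1 - of_bool (P dvd a) - of_bool (P dvd (a+h)) + \<phi> a + \<phi> (a+h)"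
    for a
  proof -
    have "\<not> (P dvd a \<and> P dvd (a+h))"
      using h dvd_diff[of P "a+h" a] unfolding P_def by auto
    then show ?thesis unfolding \<phi>_def by (cases "P dvd a"; cases "P dvd (a+h)") (auto simp: unit)
  qed
  then have "pair_count n h = (\<Sum>a\<in>{0..<n}. 1) - (\<Sum>a\<in>{0..<n}. of_bool (P dvd a))
      - (\<Sum>a\<in>{0..<n}. of_bool (P dvd (a+h))) + (\<Sum>a\<in>{0..<n}. \<phi> a) + (\<Sum>a\<in>{0..<n}. \<phi> (a+h))"
    unfolding pair_count_def by (simp add: sum.distrib sum_subtractf)
  also have "(\<Sum>a\<in>{0..<n}. of_bool (P dvd (a+h))) = (\<Sum>a\<in>{0..<n}. of_bool (P dvd a))"
    by (rule sum_shift_periodic[OF n0]) (simp add: dvd_mod_iff[OF Pn])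
  also have "(\<Sum>a\<in>{0..<n}. \<phi> (a+h)) = (\<Sum>a\<in>{0..<n}. \<phi> a)"
    by (rule sum_shift_periodic[OF n0]) (simp add: \<phi>_def dvd_mod_iff[OF Pn])
  also have "(\<Sum>a\<in>{0..<n}. \<phi> a) = sos_count (P^j)"
    unfolding \<phi>_eq n_def sos_count_def P_def by (rule sum_multiples_p_sq)
  also have "(\<Sum>a\<in>{0..<n}. of_bool (P dvd a)) = P^(j+1)"
    unfolding n_def P_def by (rule count_multiples_p)
  finally show ?thesis using n0 unfolding n_def P_def by simp
qed

text \<open>If p divides h exactly once, a and a + h cannot both be multiples of p^2,
  so a pair is good iff a (equivalently a + h) is a unit.\<close>
lemma pair_count_exact:
  assumes h1: "int p dvd h" and h2: "\<not> int p ^ 2 dvd h"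
  shows "pair_count (int p ^ (j+2)) h = int p ^ (j+2) - int p ^ (j+1)"
proof -
  define P where "P = int p"
  define n where "n = P^(j+2)"
  have n0: "n > 0" unfolding n_def P_def using int_p_pos by simp
  have m: "sos_mod n x \<longleftrightarrow> \<not> P dvd x \<or> (P^2 dvd x \<and> sos_mod (P^j) (x div P^2))" for x
    using sos_mod_prime_3_mod_4[OF p] unfolding n_def P_def by blast
  have "of_bool (sos_mod n a \<and> sos_mod n (a+h)) = (1 - of_bool (P dvd a) :: int)" for a
  proof -
    have "P dvd a + h \<longleftrightarrow> P dvd a" using h1 unfolding P_def by (simp add: dvd_add_left_iff)
    moreover have "\<not> (P^2 dvd a \<and> P^2 dvd a + h)"
      using h2 dvd_diff[of "P^2" "a+h" a] unfolding P_def by auto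
    ultimately show ?thesis using m[of a] m[of "a+h"] by auto
  qed
  then have "pair_count n h = (\<Sum>a\<in>{0..<n}. 1) - (\<Sum>a\<in>{0..<n}. of_bool (P dvd a))"
    unfolding pair_count_def by (simp add: sum_subtractf)
  then show ?thesis using count_multiples_p[of j] n0 unfolding n_def P_def by simp
qed

text \<open>If p^2 divides h, the good pairs are the pairs of units plus p^2 times the
  good pairs for h / p^2 modulo p^j.\<close>
lemma pair_count_square:
  assumes h2: "int p ^ 2 dvd h"
  shows "pair_count (int p ^ (j+2)) h = int p ^ (j+2) - int p ^ (j+1) + pair_count (int p ^ j) (h div int p ^ 2)"
proof -
  define P where "P = int p"
  define n where "n = P^(j+2)"
  have n0: "n > 0" unfolding n_def P_def using int_p_pos by simp
  have m: "sos_mod n x \<longleftrightarrow> \<not> P dvd x \<or> (P^2 dvd x \<and> sos_mod (P^j) (x div P^2))" for x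
    using sos_mod_prime_3_mod_4[OF p] unfolding n_def P_def by blast
  have h1: "P dvd h" using h2 square_dvd_imp_dvd unfolding P_def by blast
  have "of_bool (sos_mod n a \<and> sos_mod n (a+h)) = (1 - of_bool (P dvd a) :: int) +
     (if P^2 dvd a then of_bool (sos_mod (P^j) (a div P^2) \<and> sos_mod (P^j) (a div P^2 + h div P^2)) else 0)" for a
  proof -
    have "P dvd a + h \<longleftrightarrow> P dvd a" using h1 by (simp add: dvd_add_left_iff)
    moreover have "P^2 dvd a + h \<longleftrightarrow> P^2 dvd a" using h2 unfolding P_def by (simp add: dvd_add_left_iff)
    moreover have "P^2 dvd a \<Longrightarrow> (a + h) div P^2 = a div P^2 + h div P^2"
      by (simp add: div_plus_div_distrib_dvd_left)
    moreover have "P^2 dvd a \<Longrightarrow> P dvd a" using square_dvd_imp_dvd unfolding P_def by blast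
    ultimately show ?thesis using m[of a] m[of "a+h"] by auto
  qed
  then have "pair_count n h = (\<Sum>a\<in>{0..<n}. 1) - (\<Sum>a\<in>{0..<n}. of_bool (P dvd a)) +
      (\<Sum>a\<in>{0..<n}. if P^2 dvd a then of_bool (sos_mod (P^j) (a div P^2) \<and> sos_mod (P^j) (a div P^2 + h div P^2)) else 0)"
    unfolding pair_count_def by (simp add: sum.distrib sum_subtractf)
  then show ?thesis
    using count_multiples_p[of j] sum_multiples_p_sq[where j=j] n0 unfolding n_def P_def pair_count_def by simp
qed


lemma sos_density_tendsto:
  "(\<lambda>k. real_of_int (sos_count (int p ^ k)) / real p ^ k) \<longlonglongrightarrow> real p / (real p + 1)"
proof -
  define q where "q = real p"
  have q1: "q > 1" unfolding q_def using prime_gt_1_nat[OF p(1)] by simp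
  define e where "e k = real_of_int (if even k then 1 else int p)" for k :: nat
  have e_bounds: "0 \<le> e k" "e k \<le> q" for k unfolding e_def q_def using q1 q_def by auto
  have closed: "(q+1) * real_of_int (sos_count (int p ^ k)) = q^(k+1) + e k" for k
    using arg_cong[OF sos_count_closed[of k], of real_of_int] unfolding q_def e_def by simp
  have eq: "real_of_int (sos_count (int p ^ k)) / real p ^ k = q/(q+1) + e k / ((q+1) * q^k)" for k
  proof -
    have "real_of_int (sos_count (int p ^ k)) = (q * q^k + e k) / (q+1)"
      using closed[of k] q1 by (simp add: field_simps)
    then have "real_of_int (sos_count (int p ^ k)) / q^k = (q * q^k + e k) / ((q+1) * q^k)" by simp
    also have "\<dots> = (q * q^k) / ((q+1) * q^k) + e k / ((q+1) * q^k)" by (rule add_divide_distrib)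
    also have "(q * q^k) / ((q+1) * q^k) = q/(q+1)" using q1 by simp
    finally show ?thesis unfolding q_def .
  qed
  have "(\<lambda>k. e k / ((q+1) * q^k)) \<longlonglongrightarrow> 0"
  proof (rule Lim_null_comparison)
    show "eventually (\<lambda>k. norm (e k / ((q+1) * q^k)) \<le> q/(q+1) * (1/q)^k) sequentially"
    proof (rule always_eventually, rule allI)
      fix k
      have pos: "(q+1) * q^k > 0" using q1 by simp
      have "norm (e k / ((q+1) * q^k)) \<le> q / ((q+1)*q^k)"
        using e_bounds pos by (simp add: divide_right_mono)
      also have "\<dots> = q/(q+1) * (1/q)^k" by (simp add: power_one_over)
      finally show "norm (e k / ((q+1) * q^k)) \<le> q/(q+1) * (1/q)^k" .
    qed
    show "(\<lambda>k. q/(q+1) * (1/q)^k) \<longlonglongrightarrow> 0"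
      using q1 by (intro tendsto_mult_right_zero LIMSEQ_power_zero) simp
  qed
  then have "(\<lambda>k. q/(q+1) + e k / ((q+1) * q^k)) \<longlonglongrightarrow> q/(q+1) + 0" by (intro tendsto_add tendsto_const)
  then show ?thesis unfolding eq q_def by simp
qed

lemma tendsto_3_mod_4_unit:
  assumes "\<not> int p dvd h"
  shows "med_ratio p h \<longlonglongrightarrow> dens_3_mod_4 (1 / real p) 0"
proof (rule med_ratio_tendsto[OF p(1)])
  define r where "r = 1 / real p"
  have p1: "real p > 1" using prime_gt_1_nat[OF p(1)] by simp
  have "real_of_int (pair_count (int p ^ (k+2)) h) / real p ^ (k+2)
      = (1 - 2*r) + 2*r^2 * (real_of_int (sos_count (int p ^ k)) / real p ^ k)" for k
    unfolding pair_count_unit[OF assms] r_def using p1 by (simp add: field_simps power_add power2_eq_square)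
  moreover have "(\<lambda>k. (1 - 2*r) + 2*r^2 * (real_of_int (sos_count (int p ^ k)) / real p ^ k))
      \<longlonglongrightarrow> (1 - 2*r) + 2*r^2 * (real p / (real p + 1))"
    by (intro tendsto_intros sos_density_tendsto)
  moreover have "(1 - 2*r) + 2*r^2 * (real p / (real p + 1)) = dens_3_mod_4 r 0"
  proof -
    have r0: "r > 0" unfolding r_def using p1 by simp
    have frac: "real p / (real p + 1) = 1 / (1 + r)" unfolding r_def using p1 by (simp add: field_simps)
    show ?thesis unfolding frac dens_3_mod_4_def using r0 by (simp add: field_simps power2_eq_square)
  qed
  ultimately show "(\<lambda>k. real_of_int (pair_count (int p ^ (k+2)) h) / real p ^ (k+2))
      \<longlonglongrightarrow> dens_3_mod_4 (1 / real p) 0"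
    unfolding r_def by simp
qed

lemma tendsto_3_mod_4_exact:
  assumes "int p dvd h" "\<not> int p ^ 2 dvd h"
  shows "med_ratio p h \<longlonglongrightarrow> dens_3_mod_4 (1 / real p) 1"
proof (rule med_ratio_tendsto[OF p(1)])
  have p1: "real p > 1" using prime_gt_1_nat[OF p(1)] by simp
  have "real_of_int (pair_count (int p ^ (k+2)) h) / real p ^ (k+2) = 1 - 1 / real p" for k
    unfolding pair_count_exact[OF assms] using p1 by (simp add: field_simps power_add)
  moreover have "dens_3_mod_4 r 1 = 1 - r" if "r > 0" for r
    using that unfolding dens_3_mod_4_def by (simp add: field_simps power2_eq_square)
  then have "1 - 1 / real p = dens_3_mod_4 (1 / real p) 1" using p1 by simp
  ultimately have "real_of_int (pair_count (int p ^ (k+2)) h) / real p ^ (k+2) = dens_3_mod_4 (1 / real p) 1" for k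
    by simp
  then show "(\<lambda>k. real_of_int (pair_count (int p ^ (k+2)) h) / real p ^ (k+2))
      \<longlonglongrightarrow> dens_3_mod_4 (1 / real p) 1"
    by simp
qed

lemma tendsto_3_mod_4_square:
  assumes h: "int p ^ 2 dvd h" and lim: "med_ratio p (h div int p ^ 2) \<longlonglongrightarrow> dens_3_mod_4 (1 / real p) m"
  shows "med_ratio p h \<longlonglongrightarrow> dens_3_mod_4 (1 / real p) (m+2)"
proof (rule med_ratio_tendsto[OF p(1)])
  define r where "r = 1 / real p"
  have p1: "real p > 1" using prime_gt_1_nat[OF p(1)] by simp
  have "real_of_int (pair_count (int p ^ (k+2)) h) / real p ^ (k+2)
      = (1 - r) + r^2 * med_ratio p (h div int p ^ 2) k" for k
    unfolding pair_count_square[OF h] med_ratio_pair_count[OF p(1)] r_def using p1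
    by (simp add: field_simps power_add power2_eq_square)
  then have eq: "(\<lambda>k. real_of_int (pair_count (int p ^ (k+2)) h) / real p ^ (k+2))
      = (\<lambda>k. (1 - r) + r^2 * med_ratio p (h div int p ^ 2) k)" by (rule ext)
  have "r > 0" unfolding r_def using p1 by simp
  then have step: "dens_3_mod_4 r (m+2) = (1 - r) + r^2 * dens_3_mod_4 r m" by (rule dens_3_mod_4_step)
  show "(\<lambda>k. real_of_int (pair_count (int p ^ (k+2)) h) / real p ^ (k+2))
      \<longlonglongrightarrow> dens_3_mod_4 (1 / real p) (m+2)"
    unfolding eq r_def[symmetric] step using lim unfolding r_def[symmetric] by (intro tendsto_intros)
qed

lemma tendsto_3_mod_4:
  assumes "h > 0"
  shows "med_ratio p h \<longlonglongrightarrow> dens_3_mod_4 (1 / real p) (multiplicity (int p) h)"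
  using assms
proof (induction "multiplicity (int p) h" arbitrary: h rule: less_induct)
  case less
  define m where "m = multiplicity (int p) h"
  have "\<not> is_unit (int p)" using int_p_prime(1) not_prime_unit by blast
  then have le: "int p ^ n dvd h \<longleftrightarrow> n \<le> m" for n
    using power_dvd_iff_le_multiplicity[of h "int p" n] less.prems unfolding m_def by simp
  consider "m = 0" | "m = 1" | "m \<ge> 2" by linarith
  then show ?case
  proof cases
    case 1
    then show ?thesis using tendsto_3_mod_4_unit le[of 1] unfolding m_def by simp
  next
    case 2
    then show ?thesis using tendsto_3_mod_4_exact le[of 1] le[of 2] unfolding m_def by simp
  next
    case 3
    then have d: "int p ^ 2 dvd h" using le[of 2] by simp
    define h' where "h' = h div int p ^ 2"
    have "h' > 0" using d less.prems int_p_pos unfolding h'_def by (auto elim!: dvdE simp: zero_less_mult_iff)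
    moreover have m': "multiplicity (int p) h' = m - 2"
      using multiplicity_div_prime_power[OF int_p_prime(1) d] less.prems unfolding h'_def m_def by simp
    moreover have "multiplicity (int p) h' < multiplicity (int p) h" using m' 3 unfolding m_def by simp
    ultimately have "med_ratio p h' \<longlonglongrightarrow> dens_3_mod_4 (1 / real p) (m - 2)"
      using less.hyps[of h'] by simp
    moreover have "m - 2 + 2 = m" using 3 by simp
    ultimately show ?thesis using tendsto_3_mod_4_square[OF d, of "m - 2"] unfolding h'_def m_def by simp
  qed
qed

end

section \<open>Densities for the prime 2\<close>

text \<open>For odd h, the density is (2^k + 1) / 2^(k+2), which tends to 1/4.\<close>
lemma tendsto_2_odd:
  assumes "odd h"
  shows "med_ratio 2 h \<longlonglongrightarrow> dens_2 0"
proof (rule med_ratio_tendsto)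
  have "real_of_int (pair_count (int 2 ^ (k+2)) h) / real 2 ^ (k+2) = 1/4 + 1/4 * (1/2)^k" for k
    unfolding of_nat_numeral pair_count_2_odd[OF assms] sos_count_2_power
    by (simp add: field_simps power_add power_one_over)
  moreover have "(\<lambda>k. 1/4 + 1/4 * (1/2::real)^k) \<longlonglongrightarrow> 1/4 + 1/4 * 0"
    by (intro tendsto_intros LIMSEQ_power_zero) simp
  ultimately show "(\<lambda>k. real_of_int (pair_count (int 2 ^ (k+2)) h) / real 2 ^ (k+2)) \<longlonglongrightarrow> dens_2 0"
    unfolding dens_2_def by simp
qed simp

lemma tendsto_2_even:
  assumes h: "even h" and lim: "med_ratio 2 (h div 2) \<longlonglongrightarrow> L"
  shows "med_ratio 2 h \<longlonglongrightarrow> (if 4 dvd h then 1/4 else 0) + L / 2"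
proof (rule med_ratio_tendsto)
  have "real_of_int (pair_count (int 2 ^ (k+2)) h) / real 2 ^ (k+2)
      = (if 4 dvd h then 1/4 else 0) + med_ratio 2 (h div 2) (k+1) / 2" for k
    unfolding of_nat_numeral pair_count_2_even[OF h] med_ratio_pair_count[OF two_is_prime_nat]
    by (simp add: field_simps power_add)
  moreover have "(\<lambda>k. med_ratio 2 (h div 2) (k+1)) \<longlonglongrightarrow> L"
    using lim by (rule LIMSEQ_ignore_initial_segment)
  then have "(\<lambda>k. (if 4 dvd h then 1/4 else 0) + med_ratio 2 (h div 2) (k+1) / 2)
      \<longlonglongrightarrow> (if 4 dvd h then 1/4 else 0) + L / 2"
    by (intro tendsto_intros) simp_all
  ultimately show "(\<lambda>k. real_of_int (pair_count (int 2 ^ (k+2)) h) / real 2 ^ (k+2))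
      \<longlonglongrightarrow> (if 4 dvd h then 1/4 else 0) + L / 2"
    by simp
qed simp

lemma tendsto_2:
  assumes "h > 0"
  shows "med_ratio 2 h \<longlonglongrightarrow> dens_2 (multiplicity 2 h)"
  using assms
proof (induction "multiplicity 2 h" arbitrary: h)
  case 0
  then have "odd h" using multiplicity_eq_zero_iff[of h 2] by simp
  then show ?case using tendsto_2_odd 0 by simp
next
  case (Suc m)
  have le: "2 ^ n dvd h \<longleftrightarrow> n \<le> Suc m" for n
    using power_dvd_iff_le_multiplicity[of h 2 n] Suc by simp
  then have h: "even h" using le[of 1] by simp
  have "h div 2 > 0" using h Suc.prems by auto
  moreover have "multiplicity 2 (h div 2) = m"
    using multiplicity_div_prime_power[of 2 1 h] h Suc by simp
  ultimately have "med_ratio 2 (h div 2) \<longlonglongrightarrow> dens_2 m" using Suc.hyps(1)[of "h div 2"] by simp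
  moreover have "4 dvd h \<longleftrightarrow> m \<ge> 1" using le[of 2] by simp
  ultimately have "med_ratio 2 h \<longlonglongrightarrow> (if m \<ge> 1 then 1/4 else 0) + dens_2 m / 2"
    using tendsto_2_even[OF h] by simp
  then show ?case unfolding Suc.hyps(2)[symmetric] dens_2_step .
qed

theorem proposition5p1:
  fixes p :: nat and h :: int
  assumes "prime p" and "h > 0"
  shows "convergent (med_ratio p h)
    \<and> (p mod 4 = 1 \<longrightarrow> Med2 p h = 1)
    \<and> (p mod 4 = 3 \<longrightarrow> Med2 p h =
          (1 - real p powi (- (int (multiplicity (int p) h) + 1))) / (1 + 1 / real p))
    \<and> (p = 2 \<longrightarrow> multiplicity 2 h = 0 \<longrightarrow> Med2 p h = 1/4)
    \<and> (p = 2 \<longrightarrow> multiplicity 2 h \<ge> 1 \<longrightarrow>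
          Med2 p h = (2 ^ (multiplicity 2 h + 1) - 3) / 2 ^ (multiplicity 2 h + 2))"
proof -
  define L where "L = (if p = 2 then dens_2 (multiplicity 2 h)
    else if p mod 4 = 1 then 1 else dens_3_mod_4 (1 / real p) (multiplicity (int p) h))"
  have "p = 2 \<or> odd p" using prime_odd_nat[OF assms(1)] prime_ge_2_nat[OF assms(1)] by fastforce
  then have "p = 2 \<or> p mod 4 = 1 \<or> p mod 4 = 3" by presburger
  then consider "p = 2" | "p mod 4 = 1" | "p mod 4 = 3" by blast
  then have lim: "med_ratio p h \<longlonglongrightarrow> L"
  proof cases
    case 1
    then show ?thesis using tendsto_2[OF assms(2)] unfolding L_def by simp
  next
    case 2
    have "med_ratio p h = (\<lambda>k. 1)" using med_ratio_prime_1_mod_4[OF assms(1) 2] by (intro ext)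
    then show ?thesis unfolding L_def using 2 by auto
  next
    case 3
    then show ?thesis using tendsto_3_mod_4[OF assms(1) 3 assms(2)] unfolding L_def by auto
  qed
  then have "Med2 p h = L" unfolding Med2_def by (rule limI)
  then show ?thesis using convergentI[OF lim] by (auto simp: L_def dens_2_def dens_3_mod_4_powi)
qed

end
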